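(* Let $T\ge 1$ and $d\ge 1$ be integers, let $\gamma>0$ and $\beta>0$, and for each task $t\in\{1,\dots,T\}$ let $(x_{t1},y_{t1}),\dots,(x_{tm_t},y_{tm_t})\in\mathbb{R}^d\times\mathbb{R}$ be given data. Let $l:\mathbb{R}\times\mathbb{R}\to\mathbb{R}$ be a loss function that is convex in its second argument. Consider the (non-convex) problem $$\text{(P)}\qquad \min_{A\in\mathbb{R}^{d\times T},\,a_0\in\mathbb{R}^d,\,U\in O^d}\ \sum_{t=1}^{T}\sum_{i=1}^{m_t} l\big(y_{ti},\langle a_t+a_0,U^Tx_{ti}\rangle\big)+\frac{\gamma}{T}\|A\|_{2,1}^2+\beta\|a_0\|_2^2,$$ where $A=[a_1,\dots,a_T]$, and the problem $$\text{(C)}\qquad \min_{W\in\mathbb{R}^{d\times T},\,w_0\in\mathbb{R}^d,\,D}\ \sum_{t=1}^{T}\sum_{i=1}^{m_t} l\big(y_{ti},\langle w_t+w_0,x_{ti}\rangle\big)+\frac{\gamma}{T}\sum_{t=1}^T\langle w_t,D^+w_t\rangle+\beta\langle w_0,w_0\rangle$$ subject to $\operatorname{trace}(D)\le 1$, $\operatorname{range}(W)\subseteq\operatorname{range}(D)$, $D\in S_+^d$, where $W=[w_1,\dots,w_T]$. Then (C) is a convex optimization problem equivalent to (P) in the following sense. If $(\hat W,\hat w_0,\hat D)$ is an optimal solution of (C) and the columns of $\hat U$ form an orthonormal basis of eigenvectors of $\hat D$, then $(\hat A,\hat a_0,\hat U)$ with $\hat A=\hat U^T\hat W$, $\hat a_0=\hat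 U^T\hat w_0$ is an optimal solution of (P). Conversely, if $(\hat A,\hat a_0,\hat U)$ is an optimal solution of (P), then $\hat W=\hat U\hat A$, $\hat w_0=\hat U\hat a_0$, $\hat D=\hat U\,\mathrm{Diag}\!\left(\frac{\|\hat a^i\|_2}{\|\hat A\|_{2,1}}\right)_{i=1}^d\hat U^T$ is an optimal solution of (C), where $\hat a^i$ denotes the $i$-th row of $\hat A$.
   Context: $O^d$ denotes the set of $d\times d$ orthogonal matrices ($U^TU=I$). For a matrix $A\in\mathbb{R}^{d\times T}$ with rows $a^1,\dots,a^d$, $\|A\|_{2,1}=\sum_{i=1}^d\|a^i\|_2$. $S_+^d$ is the set of $d\times d$ symmetric positive semidefinite matrices; $D^+$ is the Moore–Penrose pseudoinverse of $D$; $\operatorname{range}(W)=\{Wz: z\in\mathbb{R}^T\}$; $\mathrm{Diag}(v_i)_{i=1}^d$ is the diagonal matrix with diagonal entries $v_1,\dots,v_d$. *)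

theory Defs
  imports "HOL-Analysis.Analysis"
begin

definition pinv :: "real^'n^'n \<Rightarrow> real^'n^'n" where
  "pinv D = (THE X. D ** X ** D = D \<and> X ** D ** X = X \<and>
                    transpose (D ** X) = D ** X \<and> transpose (X ** D) = X ** D)"

definition psd :: "real^'n^'n \<Rightarrow> bool" where
  "psd D \<longleftrightarrow> transpose D = D \<and> (\<forall>v. 0 \<le> v \<bullet> (D *v v))"

definition mrange :: "real^'m^'n \<Rightarrow> (real^'n) set" where
  "mrange M = {M *v z | z. True}"

definition norm21 :: "real^'t^'d \<Rightarrow> real" where
  "norm21 A = (\<Sum>i\<in>UNIV. norm (row i A))"

definition Diag :: "('d \<Rightarrow> real) \<Rightarrow> real^'d^'d" where
  "Diag v = (\<chi> i j. if i = j then v i else 0)"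

(* objective of (P); tasks indexed by type 't, data x t i, y t i for i < m t *)
definition objP ::
  "(real \<Rightarrow> real \<Rightarrow> real) \<Rightarrow> real \<Rightarrow> real \<Rightarrow> ('t::finite \<Rightarrow> nat) \<Rightarrow>
   ('t \<Rightarrow> nat \<Rightarrow> real^'d) \<Rightarrow> ('t \<Rightarrow> nat \<Rightarrow> real) \<Rightarrow>
   real^'t^'d \<Rightarrow> real^'d \<Rightarrow> real^'d^'d \<Rightarrow> real" where
  "objP l \<gamma> \<beta> m x y A a0 U =
     (\<Sum>t\<in>UNIV. \<Sum>i<m t. l (y t i) ((column t A + a0) \<bullet> (transpose U *v x t i)))
     + \<gamma> / real CARD('t) * (norm21 A)^2 + \<beta> * (norm a0)^2"

definition feasP :: "((real^'t^'d) \<times> (real^'d) \<times> (real^'d^'d)) set" where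
  "feasP = {(A, a0, U). orthogonal_matrix U}"

definition optP where
  "optP l \<gamma> \<beta> m x y A a0 U \<longleftrightarrow> (A, a0, U) \<in> feasP \<and>
     (\<forall>(A', a0', U') \<in> feasP. objP l \<gamma> \<beta> m x y A a0 U \<le> objP l \<gamma> \<beta> m x y A' a0' U')"

definition objC ::
  "(real \<Rightarrow> real \<Rightarrow> real) \<Rightarrow> real \<Rightarrow> real \<Rightarrow> ('t::finite \<Rightarrow> nat) \<Rightarrow>
   ('t \<Rightarrow> nat \<Rightarrow> real^'d) \<Rightarrow> ('t \<Rightarrow> nat \<Rightarrow> real) \<Rightarrow>
   (real^'t^'d) \<times> (real^'d) \<times> (real^'d^'d) \<Rightarrow> real" where
  "objC l \<gamma> \<beta> m x y = (\<lambda>(W, w0, D).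
     (\<Sum>t\<in>UNIV. \<Sum>i<m t. l (y t i) ((column t W + w0) \<bullet> x t i))
     + \<gamma> / real CARD('t) * (\<Sum>t\<in>UNIV. column t W \<bullet> (pinv D *v column t W))
     + \<beta> * (w0 \<bullet> w0))"

definition feasC :: "((real^'t^'d) \<times> (real^'d) \<times> (real^'d^'d)) set" where
  "feasC = {(W, w0, D). trace D \<le> 1 \<and> mrange W \<subseteq> mrange D \<and> psd D}"

definition optC where
  "optC l \<gamma> \<beta> m x y W w0 D \<longleftrightarrow> (W, w0, D) \<in> feasC \<and>
     (\<forall>p \<in> feasC. objC l \<gamma> \<beta> m x y (W, w0, D) \<le> objC l \<gamma> \<beta> m x y p)"

end

theory Submission
  imports Defs
begin

text \<open>Write a feasible \<open>D\<close> of (C) as \<open>U Diag(c) U\<^sup>T\<close> with \<open>U\<close> orthogonal, \<open>c \<ge> 0\<close> and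
  \<open>\<Sum> c\<^sub>i \<le> 1\<close>, and put \<open>W = U A\<close>, \<open>w\<^sub>0 = U a\<^sub>0\<close>. The data terms and \<open>\<parallel>w\<^sub>0\<parallel>\<close> are invariant
  under the rotation, while the penalty becomes \<open>\<Sum>\<^sub>i \<parallel>a\<^sup>i\<parallel>\<^sup>2 / c\<^sub>i\<close> (the range condition
  forces \<open>a\<^sup>i = 0\<close> whenever \<open>c\<^sub>i = 0\<close>). By Cauchy--Schwarz this is at least \<open>\<parallel>A\<parallel>\<^sub>2\<^sub>,\<^sub>1\<^sup>2\<close>,
  with equality for \<open>c\<^sub>i = \<parallel>a\<^sup>i\<parallel> / \<parallel>A\<parallel>\<^sub>2\<^sub>,\<^sub>1\<close>. Hence (C) and (P) have the same optimal value and
  optimal solutions are carried into each other by these substitutions.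

  Convexity of (C) rests on the joint convexity of \<open>(w, D) \<mapsto> w \<bullet> D\<^sup>+ w\<close> on
  \<open>{D \<succeq> 0, w \<in> range D}\<close>, which is a supremum of the affine functions \<open>2 z \<bullet> w - z \<bullet> D z\<close>.\<close>

lemma inner_matrix_vector_transpose:
  "((M::real^'n^'m) *v a) \<bullet> b = a \<bullet> (transpose M *v b)"
  by (metis dot_lmul_matrix vector_transpose_matrix)

lemma inner_symmetric_matrix:
  "transpose (D::real^'n^'n) = D \<Longrightarrow> a \<bullet> (D *v b) = (D *v a) \<bullet> b"
  by (metis inner_matrix_vector_transpose)

lemma orthogonal_matrix_inner:
  "orthogonal_matrix (U::real^'n^'n) \<Longrightarrow> (U *v a) \<bullet> (U *v b) = a \<bullet> b"
  by (simp add: inner_matrix_vector_transpose matrix_vector_mul_assoc orthogonal_matrix)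

lemma orthogonal_matrix_cancel:
  assumes "orthogonal_matrix (U::real^'n^'n)"
  shows "transpose U ** (U ** A) = A" and "U ** (transpose U ** A) = A"
  using assms by (simp_all add: matrix_mul_assoc orthogonal_matrix_def)

lemma quadratic_nonpos_imp_linear_coeff_zero:
  fixes a c :: real
  assumes "\<And>t. 2 * t * a + t^2 * c \<le> 0"
  shows "a = 0"
proof -
  define k where "k = \<bar>c\<bar> + 1"
  have k: "k > 0" "2 * k + c > 0" unfolding k_def by auto
  have "2 * (a / k) * a + (a / k)^2 * c \<le> 0" using assms .
  hence "a^2 * (2 * k + c) / k^2 \<le> 0" using k by (simp add: field_simps power2_eq_square)
  hence "a^2 * (2 * k + c) \<le> 0" using k by (simp add: divide_le_0_iff)
  hence "a^2 \<le> 0" using k by (simp add: mult_le_0_iff)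
  thus ?thesis by simp
qed

lemma if_zero_mult_distrib:
  "(if P then x else 0) * (y::real) = (if P then x * y else 0)"
  "y * (if P then x else 0) = (if P then y * x else 0)"
  by simp_all

lemma Diag_mult_Diag: "Diag a ** Diag b = Diag (\<lambda>i. a i * b i)"
  by (simp add: Diag_def matrix_matrix_mult_def vec_eq_iff if_zero_mult_distrib)

lemma transpose_Diag [simp]: "transpose (Diag a) = Diag a"
  by (simp add: Diag_def transpose_def vec_eq_iff)

lemma matrix_vector_mult_Diag: "Diag a *v v = (\<chi> i. a i * v $ i)"
  by (simp add: Diag_def matrix_vector_mult_def vec_eq_iff if_zero_mult_distrib)

lemma matrix_mult_Diag_nth: "(M ** Diag a) $ i $ j = M $ i $ j * a j"
  by (simp add: Diag_def matrix_matrix_mult_def if_zero_mult_distrib)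

lemma Diag_mult_matrix_nth: "(Diag a ** M) $ i $ j = a i * M $ i $ j"
  by (simp add: Diag_def matrix_matrix_mult_def if_zero_mult_distrib)

lemma inner_Diag: "v \<bullet> (Diag c *v v) = (\<Sum>i\<in>UNIV. c i * (v $ i)^2)"
  by (simp add: inner_vec_def matrix_vector_mult_Diag power2_eq_square mult_ac)

lemma column_matrix_mult: "column t ((M::real^'k^'n) ** W) = M *v column t W"
  by (simp add: column_def matrix_matrix_mult_def matrix_vector_mult_def vec_eq_iff)

lemma column_add [simp]: "column t (A + B) = column t A + column t B"
  by (simp add: column_def vec_eq_iff)

lemma column_scaleR [simp]: "column t (c *\<^sub>R A) = c *\<^sub>R column t A"
  by (simp add: column_def vec_eq_iff)

lemma column_in_mrange: "column t W \<in> mrange W"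
  unfolding mrange_def by (metis (mono_tags) matrix_vector_mult_basis mem_Collect_eq)

lemma matrix_combination_vector_mult:
  "(u *\<^sub>R A + v *\<^sub>R B) *v z = u *\<^sub>R (A *v z) + v *\<^sub>R ((B::real^'n^'m) *v z)"
  by (simp add: matrix_vector_mult_add_rdistrib scaleR_matrix_vector_assoc)

lemma transpose_add: "transpose (A + B) = transpose A + transpose B"
  by (simp add: transpose_def vec_eq_iff)

lemma trace_combination: "trace (u *\<^sub>R A + v *\<^sub>R (B::real^'n^'n)) = u * trace A + v * trace B"
  by (simp add: trace_def sum.distrib sum_distrib_left)

section \<open>Spectral theorem for symmetric matrices\<close>

lemma quadratic_form_attains_max_on_sphere:
  fixes D :: "real^'n^'n"
  assumes S: "subspace S" and x0: "x0 \<in> S" "x0 \<noteq> 0"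
  obtains v where "v \<in> S" "norm v = 1" "\<And>u. u \<in> S \<Longrightarrow> u \<bullet> (D *v u) \<le> (v \<bullet> (D *v v)) * (u \<bullet> u)"
proof -
  define K where "K = S \<inter> sphere 0 1"
  have unit: "u /\<^sub>R norm u \<in> K" if "u \<in> S" "u \<noteq> 0" for u
    using that S unfolding K_def by (auto simp: subspace_scale)
  have "compact K"
    unfolding K_def using S by (simp add: closed_subspace closed_Int_compact)
  moreover have "K \<noteq> {}" using unit[OF x0] by auto
  moreover have "continuous_on K (\<lambda>v. v \<bullet> (D *v v))"
    by (intro continuous_intros)
  ultimately obtain v where v: "v \<in> K" and vmax: "\<And>u. u \<in> K \<Longrightarrow> u \<bullet> (D *v u) \<le> v \<bullet> (D *v v)"
    by (metis continuous_attains_sup)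
  show thesis
  proof
    show "v \<in> S" "norm v = 1" using v unfolding K_def by auto
    fix u assume u: "u \<in> S"
    show "u \<bullet> (D *v u) \<le> (v \<bullet> (D *v v)) * (u \<bullet> u)"
    proof (cases "u = 0")
      case False
      have "(u /\<^sub>R norm u) \<bullet> (D *v (u /\<^sub>R norm u)) \<le> v \<bullet> (D *v v)"
        using vmax unit[OF u False] by blast
      hence "u \<bullet> (D *v u) / (norm u)^2 \<le> v \<bullet> (D *v v)"
        by (simp add: matrix_vector_mult_scaleR power2_eq_square divide_inverse mult_ac)
      hence "u \<bullet> (D *v u) \<le> v \<bullet> (D *v v) * (norm u)^2" using False by (simp add: divide_le_eq)
      thus ?thesis by (simp add: power2_norm_eq_inner)
    qed simp
  qed
qed

text \<open>First-order optimality of the Rayleigh quotient: perturbing the maximiser \<open>v\<close> to \<open>v + t u\<close>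
  gives a quadratic in \<open>t\<close> that is never positive, so its linear coefficient vanishes.\<close>

lemma rayleigh_maximizer_eigenvector:
  fixes D :: "real^'n^'n"
  assumes sym: "transpose D = D" and S: "subspace S" and inv: "\<And>x. x \<in> S \<Longrightarrow> D *v x \<in> S"
    and v: "v \<in> S" "v \<bullet> v = 1"
    and max: "\<And>u. u \<in> S \<Longrightarrow> u \<bullet> (D *v u) \<le> (v \<bullet> (D *v v)) * (u \<bullet> u)"
  shows "D *v v = (v \<bullet> (D *v v)) *\<^sub>R v"
proof -
  define \<mu> where "\<mu> = v \<bullet> (D *v v)"
  have orth: "(D *v v - \<mu> *\<^sub>R v) \<bullet> u = 0" if u: "u \<in> S" for u
  proof (rule quadratic_nonpos_imp_linear_coeff_zero)
    fix t
    have "v + t *\<^sub>R u \<in> S" using v u S by (simp add: subspace_add subspace_scale)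
    from max[OF this]
    have "(v + t *\<^sub>R u) \<bullet> (D *v (v + t *\<^sub>R u)) \<le> \<mu> * ((v + t *\<^sub>R u) \<bullet> (v + t *\<^sub>R u))"
      unfolding \<mu>_def .
    moreover have "v \<bullet> (D *v u) = (D *v v) \<bullet> u" using inner_symmetric_matrix[OF sym] .
    ultimately show "2 * t * ((D *v v - \<mu> *\<^sub>R v) \<bullet> u) + t^2 * (u \<bullet> (D *v u) - \<mu> * (u \<bullet> u)) \<le> 0"
      using v(2) by (simp add: matrix_vector_right_distrib matrix_vector_mult_scaleR inner_add_left
          inner_add_right inner_diff_left \<mu>_def inner_commute[of u v] inner_commute[of u "D *v v"]
          power2_eq_square algebra_simps)
  qed
  have "D *v v - \<mu> *\<^sub>R v \<in> S" using inv v S by (simp add: subspace_diff subspace_scale)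
  from orth[OF this] show ?thesis unfolding \<mu>_def by simp
qed

lemma span_insert_orthogonal_complement:
  assumes S: "subspace S" and v: "v \<in> S" "v \<bullet> v = 1" and B: "{u \<in> S. v \<bullet> u = 0} \<subseteq> span B"
  shows "S \<subseteq> span (insert v B)"
proof
  fix x assume x: "x \<in> S"
  have "x - (v \<bullet> x) *\<^sub>R v \<in> {u \<in> S. v \<bullet> u = 0}"
    using x v S by (simp add: subspace_diff subspace_scale inner_diff_right)
  hence "x - (v \<bullet> x) *\<^sub>R v \<in> span (insert v B)" using B span_mono[of B "insert v B"] by blast
  from span_add[OF this span_mul[OF span_base[OF insertI1], of "v \<bullet> x"]]
  show "x \<in> span (insert v B)" by (metis diff_add_cancel)
qed

lemma symmetric_matrix_invariant_subspace_eigenbasis: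
  fixes D :: "real^'n^'n"
  assumes sym: "transpose D = D"
  shows "subspace S \<Longrightarrow> (\<And>x. x \<in> S \<Longrightarrow> D *v x \<in> S) \<Longrightarrow>
    \<exists>B. B \<subseteq> S \<and> pairwise orthogonal B \<and> (\<forall>b\<in>B. norm b = 1) \<and>
        (\<forall>b\<in>B. \<exists>c. D *v b = c *\<^sub>R b) \<and> S \<subseteq> span B"
proof (induction "dim S" arbitrary: S rule: less_induct)
  case less
  show ?case
  proof (cases "S \<subseteq> {0}")
    case True
    then show ?thesis by (intro exI[of _ "{}"]) auto
  next
    case False
    then obtain x0 where "x0 \<in> S" "x0 \<noteq> 0" by auto
    then obtain v where v: "v \<in> S" "norm v = 1"
      and max: "\<And>u. u \<in> S \<Longrightarrow> u \<bullet> (D *v u) \<le> (v \<bullet> (D *v v)) * (u \<bullet> u)"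
      using quadratic_form_attains_max_on_sphere[OF less.prems(1)] by metis
    have vv: "v \<bullet> v = 1" using v(2) by (simp add: norm_eq_1)
    obtain \<mu> where eig: "D *v v = \<mu> *\<^sub>R v"
      using rayleigh_maximizer_eigenvector[OF sym less.prems v(1) vv max] by blast
    define S' where "S' = {u \<in> S. v \<bullet> u = 0}"
    have sub': "subspace S'" using less.prems(1) unfolding S'_def subspace_def
      by (auto simp: inner_add_right)
    have inv': "D *v u \<in> S'" if "u \<in> S'" for u
      using that less.prems(2) inner_symmetric_matrix[OF sym, of v u] eig unfolding S'_def by auto
    have "v \<notin> S'" using vv unfolding S'_def by auto
    hence "S' \<subset> S" using v(1) unfolding S'_def by blast
    hence "dim S' < dim S" using dim_psubset[of S' S] sub' less.prems(1) by (metis span_eq_iff)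
    from less.hyps[OF this sub' inv'] obtain B where B: "B \<subseteq> S'" "pairwise orthogonal B"
      "\<forall>b\<in>B. norm b = 1" "\<forall>b\<in>B. \<exists>c. D *v b = c *\<^sub>R b" "S' \<subseteq> span B" by blast
    show ?thesis
    proof (intro exI[of _ "insert v B"] conjI)
      show "insert v B \<subseteq> S" "\<forall>b\<in>insert v B. norm b = 1" "\<forall>b\<in>insert v B. \<exists>c. D *v b = c *\<^sub>R b"
        using B v eig unfolding S'_def by auto
      show "pairwise orthogonal (insert v B)"
        using B(1,2) unfolding S'_def pairwise_insert by (auto simp: orthogonal_def inner_commute)
      show "S \<subseteq> span (insert v B)"
        using span_insert_orthogonal_complement[OF less.prems(1) v(1) vv] B(5) unfolding S'_def .
    qed
  qed
qed


lemma orthogonal_eigenbasis_imp_diagonal: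
  fixes D U :: "real^'n^'n"
  assumes U: "orthogonal_matrix U" and eig: "\<And>j. D *v column j U = c j *s column j U"
  shows "D = U ** Diag c ** transpose U"
proof -
  have "(D ** U) $ i $ j = (U ** Diag c) $ i $ j" for i j
  proof -
    have "(D ** U) $ i $ j = (D *v column j U) $ i"
      by (simp add: matrix_matrix_mult_def matrix_vector_mult_def column_def)
    also have "\<dots> = c j * U $ i $ j" using eig by (simp add: column_def)
    finally show ?thesis by (simp add: matrix_mult_Diag_nth)
  qed
  hence "D ** U = U ** Diag c" by (simp add: vec_eq_iff)
  hence "D ** (U ** transpose U) = U ** Diag c ** transpose U" by (simp add: matrix_mul_assoc)
  thus ?thesis using U by (simp add: orthogonal_matrix_def)
qed

theorem symmetric_matrix_orthogonal_diagonalization: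
  fixes D :: "real^'n^'n"
  assumes sym: "transpose D = D"
  obtains U c where "orthogonal_matrix U" "\<And>j. D *v column j U = c j *s column j U"
    "D = U ** Diag c ** transpose U"
proof -
  obtain B where B: "pairwise orthogonal B" "\<forall>b\<in>B. norm b = 1" "\<forall>b\<in>B. \<exists>c. D *v b = c *\<^sub>R b"
      "UNIV \<subseteq> span B"
    using symmetric_matrix_invariant_subspace_eigenbasis[OF sym, of UNIV] by auto
  have "0 \<notin> B" using B(2) by force
  hence "independent B" using B(1) pairwise_orthogonal_independent by blast
  moreover from this have "finite B" by (rule finiteI_independent)
  moreover have "card B = CARD('n)"
    using basis_card_eq_dim[OF _ B(4) \<open>independent B\<close>] by simp
  ultimately obtain f where f: "bij_betw f (UNIV::'n set) B"
    by (metis finite_class.finite_UNIV finite_same_card_bij)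
  have fB: "f i \<in> B" for i using f by (auto simp: bij_betw_def)
  have [simp]: "norm (f i) = 1" for i using fB B(2) by blast
  have [simp]: "orthogonal (f i) (f j)" if "i \<noteq> j" for i j
    using that B(1) f by (auto simp: pairwise_def bij_betw_def inj_on_def)
  define U where "U = (\<chi> i j. f j $ i)"
  have col: "column j U = f j" for j by (simp add: U_def column_def)
  have U: "orthogonal_matrix U" by (simp add: orthogonal_matrix_orthonormal_columns col)
  have "\<forall>j. \<exists>c. D *v column j U = c *s column j U"
    using B(3) fB col by (metis scalar_mult_eq_scaleR)
  then obtain c where c: "\<And>j. D *v column j U = c j *s column j U" by metis
  show thesis using that[OF U c orthogonal_eigenbasis_imp_diagonal[OF U c]] .
qed

section \<open>Positive semidefinite matrices and their pseudoinverse\<close>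

lemma orthogonal_conj_mult:
  assumes "orthogonal_matrix (U::real^'n^'n)"
  shows "(U ** A ** transpose U) ** (U ** B ** transpose U) = U ** (A ** B) ** transpose U"
proof -
  have "(U ** A ** transpose U) ** (U ** B ** transpose U) = U ** A ** (transpose U ** U) ** B ** transpose U"
    by (simp add: matrix_mul_assoc)
  thus ?thesis using assms[unfolded orthogonal_matrix] by (simp add: matrix_mul_assoc)
qed

lemma orthogonal_conj_mult_left:
  assumes "orthogonal_matrix (U::real^'n^'n)"
  shows "(U ** A ** transpose U) ** (U ** M) = U ** (A ** M)"
proof -
  have "(U ** A ** transpose U) ** (U ** M) = U ** A ** (transpose U ** U) ** M"
    by (simp add: matrix_mul_assoc)
  thus ?thesis using assms[unfolded orthogonal_matrix] by (simp add: matrix_mul_assoc)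
qed

lemma transpose_conj: "transpose (U ** A ** transpose U :: real^'n^'n) = U ** transpose A ** transpose U"
  by (simp add: matrix_transpose_mul matrix_mul_assoc)

lemma orthogonal_conj_mult_vector:
  assumes "orthogonal_matrix (U::real^'n^'n)"
  shows "(U ** M ** transpose U) *v (U *v z) = U *v (M *v z)"
  using orthogonal_conj_mult_left[OF assms, of M "mat 1"]
  by (metis matrix_mul_rid matrix_vector_mul_assoc)

lemma trace_orthogonal_conj_Diag:
  assumes U: "orthogonal_matrix (U::real^'n^'n)"
  shows "trace (U ** Diag c ** transpose U) = sum c UNIV"
proof -
  have "trace (U ** Diag c ** transpose U) = trace ((Diag c ** transpose U) ** U)"
    by (metis matrix_mul_assoc trace_mul_sym)
  also have "\<dots> = trace (Diag c)" using U by (simp add: matrix_mul_assoc[symmetric] orthogonal_matrix)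
  finally show ?thesis by (simp add: trace_def Diag_def)
qed

lemma orthogonal_conj_Diag_column:
  assumes U: "orthogonal_matrix (U::real^'n^'n)"
  shows "(U ** Diag c ** transpose U) *v column i U = c i *s column i U"
proof -
  have "(U ** Diag c ** transpose U) ** U = U ** Diag c"
    using orthogonal_matrix_cancel(2)[OF U] by (metis U matrix_mul_assoc matrix_mul_rid orthogonal_matrix)
  hence "(U ** Diag c ** transpose U) *v column i U = column i (U ** Diag c)"
    by (metis column_matrix_mult)
  thus ?thesis by (simp add: column_def matrix_mult_Diag_nth vec_eq_iff mult.commute)
qed

lemma Penrose_conditions_unique:
  fixes D X Y :: "real^'n^'n"
  assumes X1: "D ** X ** D = D" and X2: "X ** D ** X = X" and X3: "transpose (D ** X) = D ** X"
    and X4: "transpose (X ** D) = X ** D"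
    and Y1: "D ** Y ** D = D" and Y2: "Y ** D ** Y = Y" and Y3: "transpose (D ** Y) = D ** Y"
    and Y4: "transpose (Y ** D) = Y ** D"
  shows "X = Y"
proof -
  have DT: "transpose D = transpose D ** (D ** Y)"
    by (metis Y1 Y3 matrix_transpose_mul matrix_mul_assoc)
  have "X = X ** (D ** X)" using X2 by (simp add: matrix_mul_assoc)
  also have "\<dots> = X ** transpose X ** transpose D" using X3 by (metis matrix_transpose_mul matrix_mul_assoc)
  also have "\<dots> = X ** transpose X ** transpose D ** (D ** Y)" by (metis DT matrix_mul_assoc)
  also have "\<dots> = X ** transpose (D ** X) ** (D ** Y)" by (simp add: matrix_transpose_mul matrix_mul_assoc)
  also have "\<dots> = X ** D ** Y" using X2 X3 by (simp add: matrix_mul_assoc)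
  finally have X: "X = X ** D ** Y" .
  have DT': "transpose D = (X ** D) ** transpose D"
    by (metis X1 X4 matrix_transpose_mul matrix_mul_assoc)
  have "Y = (Y ** D) ** Y" using Y2 by (simp add: matrix_mul_assoc)
  also have "\<dots> = transpose D ** transpose Y ** Y" using Y4 by (metis matrix_transpose_mul)
  also have "\<dots> = (X ** D) ** transpose D ** transpose Y ** Y" by (metis DT')
  also have "\<dots> = X ** D ** transpose (Y ** D) ** Y" by (simp add: matrix_transpose_mul matrix_mul_assoc)
  also have "\<dots> = X ** D ** (Y ** D ** Y)" using Y4 by (simp add: matrix_mul_assoc)
  also have "\<dots> = X ** D ** Y" using Y2 by simp
  finally show ?thesis using X by simp
qed

lemma pinv_eqI:
  fixes D X :: "real^'n^'n"
  assumes "D ** X ** D = D" "X ** D ** X = X" "transpose (D ** X) = D ** X" "transpose (X ** D) = X ** D"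
  shows "pinv D = X"
  unfolding pinv_def by (rule the_equality) (use assms Penrose_conditions_unique in blast)+

text \<open>The pseudoinverse inverts the nonzero eigenvalues; \<open>inverse 0 = 0\<close> takes care of the kernel.\<close>

lemma pinv_orthogonal_conj_Diag:
  fixes U :: "real^'n^'n"
  assumes U: "orthogonal_matrix U"
  shows "pinv (U ** Diag c ** transpose U) = U ** Diag (\<lambda>i. inverse (c i)) ** transpose U"
proof (rule pinv_eqI)
  have "c i * inverse (c i) * c i = c i" "inverse (c i) * c i * inverse (c i) = inverse (c i)" for i
    by (cases "c i = 0"; simp)+
  hence e1: "(\<lambda>i. c i * inverse (c i) * c i) = c"
    and e2: "(\<lambda>i. inverse (c i) * c i * inverse (c i)) = (\<lambda>i. inverse (c i))"
    by (auto simp: fun_eq_iff)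
  have e3: "(\<lambda>i. inverse (c i) * c i) = (\<lambda>i. c i * inverse (c i))"
    by (auto simp: fun_eq_iff)
  note simps = orthogonal_conj_mult[OF U] Diag_mult_Diag transpose_conj
  show "U ** Diag c ** transpose U ** (U ** Diag (\<lambda>i. inverse (c i)) ** transpose U) ** (U ** Diag c ** transpose U) =
    U ** Diag c ** transpose U" by (simp add: simps e1)
  show "U ** Diag (\<lambda>i. inverse (c i)) ** transpose U ** (U ** Diag c ** transpose U) ** (U ** Diag (\<lambda>i. inverse (c i)) ** transpose U) =
    U ** Diag (\<lambda>i. inverse (c i)) ** transpose U" by (simp add: simps e2)
  show "transpose (U ** Diag c ** transpose U ** (U ** Diag (\<lambda>i. inverse (c i)) ** transpose U)) =
    U ** Diag c ** transpose U ** (U ** Diag (\<lambda>i. inverse (c i)) ** transpose U)"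
    "transpose (U ** Diag (\<lambda>i. inverse (c i)) ** transpose U ** (U ** Diag c ** transpose U)) =
    U ** Diag (\<lambda>i. inverse (c i)) ** transpose U ** (U ** Diag c ** transpose U)"
    by (simp_all add: simps e3)
qed

lemma psd_quadratic_nonneg: "psd D \<Longrightarrow> 0 \<le> u \<bullet> (D *v u)"
  by (simp add: psd_def)

lemma psd_eigenvalue_nonneg:
  assumes "psd D" "orthogonal_matrix U" "D *v column i U = c *s column i U"
  shows "c \<ge> 0"
proof -
  have "0 \<le> column i U \<bullet> (D *v column i U)" by (rule psd_quadratic_nonneg[OF assms(1)])
  also have "\<dots> = c * (column i U \<bullet> column i U)" using assms(3) by (simp add: scalar_mult_eq_scaleR)
  also have "\<dots> = c" using assms(2) by (simp add: orthogonal_matrix_orthonormal_columns norm_eq_1)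
  finally show ?thesis .
qed

lemma psd_orthogonal_diagonalization:
  fixes D :: "real^'n^'n"
  assumes "psd D"
  obtains U c where "orthogonal_matrix U" "D = U ** Diag c ** transpose U" "\<And>i. c i \<ge> 0"
proof -
  have "transpose D = D" using assms by (simp add: psd_def)
  then obtain U c where U: "orthogonal_matrix U" and eig: "\<And>j. D *v column j U = c j *s column j U"
    and D: "D = U ** Diag c ** transpose U"
    using symmetric_matrix_orthogonal_diagonalization by blast
  show thesis using that[OF U D] psd_eigenvalue_nonneg[OF assms U eig] by blast
qed

lemma psd_orthogonal_conj_Diag:
  assumes U: "orthogonal_matrix (U::real^'n^'n)" and c: "\<And>i. c i \<ge> 0"
  shows "psd (U ** Diag c ** transpose U)"
  unfolding psd_def
proof
  show "transpose (U ** Diag c ** transpose U) = U ** Diag c ** transpose U"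
    by (simp add: transpose_conj)
  show "\<forall>v. 0 \<le> v \<bullet> ((U ** Diag c ** transpose U) *v v)"
  proof
    fix v :: "real^'n"
    have "v \<bullet> ((U ** Diag c ** transpose U) *v v) = (transpose U *v v) \<bullet> (Diag c *v (transpose U *v v))"
      by (metis inner_matrix_vector_transpose matrix_vector_mul_assoc transpose_transpose)
    also have "\<dots> \<ge> 0" unfolding inner_Diag using c by (simp add: sum_nonneg)
    finally show "0 \<le> v \<bullet> ((U ** Diag c ** transpose U) *v v)" .
  qed
qed

lemma psd_combination:
  assumes "psd D1" "psd D2" "u \<ge> 0" "v \<ge> 0"
  shows "psd (u *\<^sub>R D1 + v *\<^sub>R D2)"
  unfolding psd_def
proof
  show "transpose (u *\<^sub>R D1 + v *\<^sub>R D2) = u *\<^sub>R D1 + v *\<^sub>R D2"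
    using assms(1,2) unfolding psd_def by (simp add: transpose_add transpose_scalar)
  show "\<forall>w. 0 \<le> w \<bullet> ((u *\<^sub>R D1 + v *\<^sub>R D2) *v w)"
    using assms by (simp add: psd_def matrix_combination_vector_mult inner_add_right)
qed

lemma psd_mult_pinv_mult:
  fixes D :: "real^'n^'n"
  assumes "psd D"
  shows "D ** pinv D ** D = D"
proof -
  obtain U c where U: "orthogonal_matrix U" and D: "D = U ** Diag c ** transpose U"
    using psd_orthogonal_diagonalization[OF assms] by blast
  have "c i * inverse (c i) * c i = c i" for i by (cases "c i = 0") auto
  hence "(\<lambda>i. c i * inverse (c i) * c i) = c" by (auto simp: fun_eq_iff)
  thus ?thesis
    unfolding D pinv_orthogonal_conj_Diag[OF U] by (simp add: orthogonal_conj_mult[OF U] Diag_mult_Diag)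
qed

lemma pinv_quadratic_form_range:
  fixes D :: "real^'n^'n"
  assumes "psd D" "w = D *v z"
  shows "w \<bullet> (pinv D *v w) = z \<bullet> (D *v z)"
proof -
  have "transpose D = D" using assms by (simp add: psd_def)
  hence "w \<bullet> (pinv D *v w) = z \<bullet> (D *v (pinv D *v (D *v z)))"
    using assms(2) inner_matrix_vector_transpose[of D z] by simp
  also have "\<dots> = z \<bullet> ((D ** pinv D ** D) *v z)" by (metis matrix_vector_mul_assoc)
  finally show ?thesis using psd_mult_pinv_mult[OF assms(1)] by (simp add: matrix_mul_assoc)
qed

text \<open>On the range of \<open>D\<close>, the quadratic form of the pseudoinverse is the Legendre transform
  \<open>w \<bullet> D\<^sup>+ w = max\<^sub>z (2 z \<bullet> w - z \<bullet> D z)\<close>, the maximum being attained at any \<open>z\<close> with \<open>w = D z\<close>.\<close>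

lemma pinv_quadratic_form_ge:
  fixes D :: "real^'n^'n"
  assumes "psd D" "w = D *v z\<^sub>0"
  shows "2 * (z \<bullet> w) - z \<bullet> (D *v z) \<le> w \<bullet> (pinv D *v w)"
proof -
  have "transpose D = D" using assms by (simp add: psd_def)
  hence s: "z\<^sub>0 \<bullet> (D *v z) = z \<bullet> (D *v z\<^sub>0)"
    using inner_symmetric_matrix[of D z\<^sub>0 z] by (simp add: inner_commute)
  have "0 \<le> (z - z\<^sub>0) \<bullet> (D *v (z - z\<^sub>0))" by (rule psd_quadratic_nonneg[OF assms(1)])
  hence "0 \<le> z \<bullet> (D *v z) - 2 * (z \<bullet> (D *v z\<^sub>0)) + z\<^sub>0 \<bullet> (D *v z\<^sub>0)"
    using s by (simp add: matrix_vector_mult_diff_distrib inner_diff_left inner_diff_right)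
  thus ?thesis using pinv_quadratic_form_range[OF assms] assms(2) by simp
qed

lemma psd_quadratic_zero_imp_null:
  fixes D :: "real^'n^'n"
  assumes "psd D" "u \<bullet> (D *v u) = 0"
  shows "D *v u = 0"
proof -
  have sym: "transpose D = D" using assms by (simp add: psd_def)
  have "x \<bullet> (D *v u) = 0" for x
  proof -
    have "2 * t * (- (x \<bullet> (D *v u))) + t^2 * (- (x \<bullet> (D *v x))) \<le> 0" for t
    proof -
      have "0 \<le> (u + t *\<^sub>R x) \<bullet> (D *v (u + t *\<^sub>R x))" by (rule psd_quadratic_nonneg[OF assms(1)])
      moreover have "u \<bullet> (D *v x) = x \<bullet> (D *v u)"
        using inner_symmetric_matrix[OF sym, of u x] by (simp add: inner_commute)
      ultimately show ?thesis using assms(2)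
        by (simp add: matrix_vector_right_distrib matrix_vector_mult_scaleR inner_add_left inner_add_right
              power2_eq_square algebra_simps)
    qed
    from quadratic_nonpos_imp_linear_coeff_zero[OF this] show ?thesis by simp
  qed
  from this[of "D *v u"] show ?thesis by simp
qed

lemma psd_orthogonal_kernel_imp_mrange:
  fixes D :: "real^'n^'n"
  assumes "psd D" and ker: "\<And>u. D *v u = 0 \<Longrightarrow> u \<bullet> v = 0"
  shows "v \<in> mrange D"
proof -
  obtain U c where U: "orthogonal_matrix U" and D: "D = U ** Diag c ** transpose U"
    using psd_orthogonal_diagonalization[OF assms(1)] by blast
  define a where "a = transpose U *v v"
  have a0: "a $ i = 0" if "c i = 0" for i
  proof -
    have "D *v column i U = 0" using orthogonal_conj_Diag_column[OF U, of c i] that D by simp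
    hence "column i U \<bullet> v = 0" using ker by blast
    thus ?thesis
      unfolding a_def by (simp add: transpose_def matrix_vector_mult_def inner_vec_def column_def)
  qed
  have "Diag c *v (Diag (\<lambda>i. inverse (c i)) *v a) = a"
    using a0 by (auto simp: matrix_vector_mult_Diag vec_eq_iff) (metis right_inverse)
  hence "D *v (U *v (Diag (\<lambda>i. inverse (c i)) *v a)) = U *v a"
    unfolding D orthogonal_conj_mult_vector[OF U] by simp
  also have "U *v a = v"
    unfolding a_def using U by (metis matrix_vector_mul_assoc matrix_vector_mul_lid orthogonal_matrix_def)
  finally show ?thesis unfolding mrange_def by blast
qed

text \<open>The kernel of a sum of positive semidefinite matrices is the intersection of their kernels,
  so its range, the orthogonal complement of the kernel, contains both ranges.\<close>

lemma mrange_psd_combination: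
  fixes D1 D2 :: "real^'n^'n"
  assumes p1: "psd D1" and p2: "psd D2" and u: "u \<ge> 0" and v: "v \<ge> 0"
    and w1: "w1 \<in> mrange D1" and w2: "w2 \<in> mrange D2"
  shows "u *\<^sub>R w1 + v *\<^sub>R w2 \<in> mrange (u *\<^sub>R D1 + v *\<^sub>R D2)"
proof (rule psd_orthogonal_kernel_imp_mrange[OF psd_combination[OF p1 p2 u v]])
  obtain z1 z2 where z1: "w1 = D1 *v z1" and z2: "w2 = D2 *v z2" using w1 w2 unfolding mrange_def by blast
  fix a assume a: "(u *\<^sub>R D1 + v *\<^sub>R D2) *v a = 0"
  have "u * (a \<bullet> (D1 *v a)) + v * (a \<bullet> (D2 *v a)) = a \<bullet> ((u *\<^sub>R D1 + v *\<^sub>R D2) *v a)"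
    by (simp add: matrix_combination_vector_mult inner_add_right)
  hence "u * (a \<bullet> (D1 *v a)) + v * (a \<bullet> (D2 *v a)) = 0" using a by simp
  moreover have "u * (a \<bullet> (D1 *v a)) \<ge> 0" "v * (a \<bullet> (D2 *v a)) \<ge> 0"
    using u v psd_quadratic_nonneg[OF p1] psd_quadratic_nonneg[OF p2] by auto
  ultimately have "u * (a \<bullet> (D1 *v a)) = 0" "v * (a \<bullet> (D2 *v a)) = 0" by linarith+
  hence "u = 0 \<or> D1 *v a = 0" "v = 0 \<or> D2 *v a = 0"
    using psd_quadratic_zero_imp_null[OF p1] psd_quadratic_zero_imp_null[OF p2] by auto
  moreover have "a \<bullet> w1 = (D1 *v a) \<bullet> z1" "a \<bullet> w2 = (D2 *v a) \<bullet> z2"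
    using p1 p2 inner_symmetric_matrix[of D1 a z1] inner_symmetric_matrix[of D2 a z2] z1 z2
    by (simp_all add: psd_def)
  ultimately show "a \<bullet> (u *\<^sub>R w1 + v *\<^sub>R w2) = 0" by (auto simp: inner_add_right)
qed

section \<open>Convexity of problem (C)\<close>

type_synonym ('t, 'd) param_triple = "(real^'t^'d) \<times> (real^'d) \<times> (real^'d^'d)"

lemma convex_on_linear_image:
  assumes "convex_on T g" "linear f" "f ` S \<subseteq> T" "convex S"
  shows "convex_on S (\<lambda>x. g (f x))"
  using assms unfolding convex_on_def by (auto simp: linear_add linear_scale image_subset_iff)

lemma convex_on_sum_family:
  assumes "finite I" "convex S" "\<And>i. i \<in> I \<Longrightarrow> convex_on S (f i)"
  shows "convex_on S (\<lambda>x. \<Sum>i\<in>I. f i x)"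
  using assms by (induction I rule: finite_induct) (auto simp: convex_on_const)

lemma convex_on_inner_self: "convex_on UNIV (\<lambda>w::'a::real_inner. w \<bullet> w)"
  unfolding convex_on_def
proof (intro conjI convex_UNIV ballI allI impI)
  fix a b :: 'a and u v :: real
  assume uv: "0 \<le> u" "0 \<le> v" "u + v = 1"
  hence v: "v = 1 - u" by simp
  have "u * (a \<bullet> a) + v * (b \<bullet> b) - (u *\<^sub>R a + v *\<^sub>R b) \<bullet> (u *\<^sub>R a + v *\<^sub>R b) = u * v * ((a - b) \<bullet> (a - b))"
    unfolding v by (simp add: inner_add_left inner_add_right inner_diff_left inner_diff_right inner_commute[of b a]
        algebra_simps power2_eq_square)
  moreover have "0 \<le> u * v * ((a - b) \<bullet> (a - b))" using uv by simp
  ultimately show "(u *\<^sub>R a + v *\<^sub>R b) \<bullet> (u *\<^sub>R a + v *\<^sub>R b) \<le> u * (a \<bullet> a) + v * (b \<bullet> b)" by linarith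
qed

lemma convex_psd_mrange_pairs: "convex {(w, D::real^'n^'n). psd D \<and> w \<in> mrange D}"
  unfolding convex_def
  by (auto intro: psd_combination mrange_psd_combination)

lemma convex_on_pinv_quadratic_form:
  "convex_on {(w, D::real^'n^'n). psd D \<and> w \<in> mrange D} (\<lambda>(w, D). w \<bullet> (pinv D *v w))"
  unfolding convex_on_def
proof (intro conjI convex_psd_mrange_pairs ballI allI impI)
  fix p q :: "(real^'n) \<times> (real^'n^'n)" and u v :: real
  assume p: "p \<in> {(w, D). psd D \<and> w \<in> mrange D}" and q: "q \<in> {(w, D). psd D \<and> w \<in> mrange D}"
    and uv: "0 \<le> u" "0 \<le> v" "u + v = 1"
  obtain w1 D1 w2 D2 where pq: "p = (w1, D1)" "q = (w2, D2)" by fastforce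
  have p1: "psd D1" "w1 \<in> mrange D1" and p2: "psd D2" "w2 \<in> mrange D2" using p q pq by auto
  then obtain z1 z2 where z1: "w1 = D1 *v z1" and z2: "w2 = D2 *v z2" unfolding mrange_def by blast
  define w D where "w = u *\<^sub>R w1 + v *\<^sub>R w2" and "D = u *\<^sub>R D1 + v *\<^sub>R D2"
  obtain z where z: "w = D *v z"
    using mrange_psd_combination[OF p1(1) p2(1) uv(1,2) p1(2) p2(2)] unfolding w_def D_def mrange_def by blast
  have "w \<bullet> (pinv D *v w) = 2 * (z \<bullet> w) - z \<bullet> (D *v z)"
    using pinv_quadratic_form_range[OF psd_combination[OF p1(1) p2(1) uv(1,2)], folded D_def, OF z] z by simp
  also have "\<dots> = u * (2 * (z \<bullet> w1) - z \<bullet> (D1 *v z)) + v * (2 * (z \<bullet> w2) - z \<bullet> (D2 *v z))"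
    unfolding w_def D_def matrix_combination_vector_mult by (simp add: inner_add_right algebra_simps)
  also have "\<dots> \<le> u * (w1 \<bullet> (pinv D1 *v w1)) + v * (w2 \<bullet> (pinv D2 *v w2))"
    using pinv_quadratic_form_ge[OF p1(1) z1, of z] pinv_quadratic_form_ge[OF p2(1) z2, of z] uv
    by (intro add_mono mult_left_mono) auto
  finally show "(case u *\<^sub>R p + v *\<^sub>R q of (w, D) \<Rightarrow> w \<bullet> (pinv D *v w))
      \<le> u * (case p of (w, D) \<Rightarrow> w \<bullet> (pinv D *v w)) + v * (case q of (w, D) \<Rightarrow> w \<bullet> (pinv D *v w))"
    unfolding pq w_def D_def by simp
qed

lemma convex_feasC: "convex (feasC :: ('t::finite, 'd::finite) param_triple set)"
  unfolding convex_def
proof (intro ballI allI impI)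
  fix p q :: "('t, 'd) param_triple" and u v :: real
  assume p: "p \<in> feasC" and q: "q \<in> feasC" and uv: "0 \<le> u" "0 \<le> v" "u + v = 1"
  obtain W1 w1 D1 W2 w2 D2 where pq: "p = (W1, w1, D1)" "q = (W2, w2, D2)" by (cases p, cases q) fastforce
  have F1: "trace D1 \<le> 1" "mrange W1 \<subseteq> mrange D1" "psd D1"
    and F2: "trace D2 \<le> 1" "mrange W2 \<subseteq> mrange D2" "psd D2"
    using p q pq by (auto simp: feasC_def)
  have "trace (u *\<^sub>R D1 + v *\<^sub>R D2) \<le> u * 1 + v * 1"
    unfolding trace_combination using F1(1) F2(1) uv by (intro add_mono mult_left_mono) auto
  moreover have "mrange (u *\<^sub>R W1 + v *\<^sub>R W2) \<subseteq> mrange (u *\<^sub>R D1 + v *\<^sub>R D2)"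
  proof
    fix w assume "w \<in> mrange (u *\<^sub>R W1 + v *\<^sub>R W2)"
    then obtain z where "w = u *\<^sub>R (W1 *v z) + v *\<^sub>R (W2 *v z)"
      unfolding mrange_def by (auto simp: matrix_combination_vector_mult)
    moreover have "W1 *v z \<in> mrange D1" "W2 *v z \<in> mrange D2" using F1(2) F2(2) unfolding mrange_def by blast+
    ultimately show "w \<in> mrange (u *\<^sub>R D1 + v *\<^sub>R D2)"
      using mrange_psd_combination[OF F1(3) F2(3) uv(1,2)] by blast
  qed
  ultimately show "u *\<^sub>R p + v *\<^sub>R q \<in> feasC"
    using pq uv(3) psd_combination[OF F1(3) F2(3) uv(1,2)] by (simp add: feasC_def)
qed

lemma objC_split:
  "objC l \<gamma> \<beta> m x y p =
     (\<Sum>t\<in>UNIV. \<Sum>i<m t. l (y t i) ((column t (fst p) + fst (snd p)) \<bullet> x t i))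
     + \<gamma> / real CARD('t) * (\<Sum>t\<in>UNIV. column t (fst p) \<bullet> (pinv (snd (snd p)) *v column t (fst p)))
     + \<beta> * (fst (snd p) \<bullet> fst (snd p))"
  for p :: "('t::finite, 'd::finite) param_triple"
  by (cases p) (simp add: objC_def)

lemma convex_on_objC:
  assumes "\<gamma> \<ge> 0" "\<beta> \<ge> 0" and l: "\<And>a. convex_on UNIV (l a)"
  shows "convex_on (feasC :: ('t::finite, 'd::finite) param_triple set) (objC l \<gamma> \<beta> m x y)"
proof -
  note S = convex_feasC[where 't='t and 'd='d]
  have loss: "convex_on (feasC :: ('t, 'd) param_triple set)
      (\<lambda>p. l (y t i) ((column t (fst p) + fst (snd p)) \<bullet> x t i))" for t :: 't and i
    by (rule convex_on_linear_image[OF l _ _ S]) (auto intro!: linearI simp: inner_add_left algebra_simps)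
  have penalty: "convex_on (feasC :: ('t, 'd) param_triple set)
      (\<lambda>p. column t (fst p) \<bullet> (pinv (snd (snd p)) *v column t (fst p)))" for t :: 't
  proof -
    have image: "(\<lambda>p. (column t (fst p), snd (snd p))) ` (feasC :: ('t, 'd) param_triple set)
        \<subseteq> {(w, D). psd D \<and> w \<in> mrange D}"
      using column_in_mrange by (fastforce simp: feasC_def)
    have "linear (\<lambda>p. (column t (fst p), snd (snd p)))" by (auto intro!: linearI)
    from convex_on_linear_image[OF convex_on_pinv_quadratic_form this image S] show ?thesis by simp
  qed
  have square: "convex_on (feasC :: ('t, 'd) param_triple set) (\<lambda>p. fst (snd p) \<bullet> fst (snd p))"
    by (rule convex_on_linear_image[OF convex_on_inner_self _ _ S]) (auto intro!: linearI)
  show ?thesis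
    using loss penalty square assms(1,2) unfolding objC_split[abs_def]
    by (intro convex_on_add convex_on_cmul convex_on_sum_family S) auto
qed

section \<open>Equivalence of problems (P) and (C)\<close>

lemma mrange_subset_orthogonal_conj_Diag_iff:
  fixes U :: "real^'d^'d" and W :: "real^'t^'d"
  assumes U: "orthogonal_matrix U"
  shows "mrange W \<subseteq> mrange (U ** Diag c ** transpose U) \<longleftrightarrow>
    (\<forall>i t. c i = 0 \<longrightarrow> (transpose U ** W) $ i $ t = 0)"
proof
  assume R: "mrange W \<subseteq> mrange (U ** Diag c ** transpose U)"
  show "\<forall>i t. c i = 0 \<longrightarrow> (transpose U ** W) $ i $ t = 0"
  proof (intro allI impI)
    fix i t assume c: "c i = 0"
    obtain z where z: "column t W = (U ** Diag c ** transpose U) *v z"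
      using R column_in_mrange unfolding mrange_def by blast
    have "transpose U ** (U ** Diag c ** transpose U) = Diag c ** transpose U"
      by (metis matrix_mul_assoc orthogonal_matrix_cancel(1)[OF U])
    hence "column t (transpose U ** W) = (Diag c ** transpose U) *v z"
      unfolding column_matrix_mult z matrix_vector_mul_assoc by simp
    hence "(transpose U ** W) $ i $ t = (Diag c *v (transpose U *v z)) $ i"
      unfolding matrix_vector_mul_assoc by (metis column_def vec_lambda_beta)
    also have "\<dots> = 0" using c by (simp add: matrix_vector_mult_Diag)
    finally show "(transpose U ** W) $ i $ t = 0" .
  qed
next
  assume Z: "\<forall>i t. c i = 0 \<longrightarrow> (transpose U ** W) $ i $ t = 0"
  define A where "A = transpose U ** W"
  have W: "W = U ** A" unfolding A_def using orthogonal_matrix_cancel(2)[OF U] by metis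
  have "c i * inverse (c i) * A $ i $ t = A $ i $ t" for i t
    using Z by (cases "c i = 0") (auto simp: A_def)
  hence "Diag (\<lambda>i. c i * inverse (c i)) ** A = A"
    by (simp add: vec_eq_iff Diag_mult_matrix_nth)
  hence WD: "(U ** Diag c ** transpose U) ** (U ** (Diag (\<lambda>i. inverse (c i)) ** A)) = W"
    unfolding W orthogonal_conj_mult_left[OF U] by (simp add: matrix_mul_assoc Diag_mult_Diag)
  show "mrange W \<subseteq> mrange (U ** Diag c ** transpose U)"
  proof
    fix w assume "w \<in> mrange W"
    then obtain z where "w = W *v z" unfolding mrange_def by blast
    hence "w = (U ** Diag c ** transpose U) *v ((U ** (Diag (\<lambda>i. inverse (c i)) ** A)) *v z)"
      unfolding matrix_vector_mul_assoc WD .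
    thus "w \<in> mrange (U ** Diag c ** transpose U)" unfolding mrange_def by blast
  qed
qed

lemma norm_row_power2: "(norm (row i (A::real^'t^'d)))^2 = (\<Sum>t\<in>UNIV. (A $ i $ t)^2)"
  unfolding power2_norm_eq_inner by (simp add: inner_vec_def row_def power2_eq_square)

lemma sum_pinv_quadratic_orthogonal_conj_Diag:
  fixes U :: "real^'d^'d" and W :: "real^'t^'d"
  assumes U: "orthogonal_matrix U"
  shows "(\<Sum>t\<in>UNIV. column t W \<bullet> (pinv (U ** Diag c ** transpose U) *v column t W)) =
         (\<Sum>i\<in>UNIV. inverse (c i) * (norm (row i (transpose U ** W)))^2)"
proof -
  define A where "A = transpose U ** W"
  have W: "W = U ** A" unfolding A_def using orthogonal_matrix_cancel(2)[OF U] by metis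
  have "column t W \<bullet> (pinv (U ** Diag c ** transpose U) *v column t W) =
      (\<Sum>i\<in>UNIV. inverse (c i) * (A $ i $ t)^2)" for t
  proof -
    have "column t W \<bullet> (pinv (U ** Diag c ** transpose U) *v column t W) =
        (U *v column t A) \<bullet> (U *v (Diag (\<lambda>i. inverse (c i)) *v column t A))"
      unfolding W column_matrix_mult pinv_orthogonal_conj_Diag[OF U] orthogonal_conj_mult_vector[OF U] ..
    also have "\<dots> = column t A \<bullet> (Diag (\<lambda>i. inverse (c i)) *v column t A)"
      by (rule orthogonal_matrix_inner[OF U])
    finally show ?thesis by (simp add: inner_Diag column_def)
  qed
  hence "(\<Sum>t\<in>UNIV. column t W \<bullet> (pinv (U ** Diag c ** transpose U) *v column t W)) =
      (\<Sum>t\<in>UNIV. \<Sum>i\<in>UNIV. inverse (c i) * (A $ i $ t)^2)"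
    by simp
  also have "\<dots> = (\<Sum>i\<in>UNIV. inverse (c i) * (\<Sum>t\<in>UNIV. (A $ i $ t)^2))"
    by (subst sum.swap) (simp add: sum_distrib_left)
  finally show ?thesis by (simp add: norm_row_power2 A_def)
qed

text \<open>Cauchy--Schwarz in the form \<open>(\<Sum> r\<^sub>i)\<^sup>2 \<le> (\<Sum> c\<^sub>i) (\<Sum> r\<^sub>i\<^sup>2 / c\<^sub>i)\<close>, proved termwise from
  \<open>2 r\<^sub>i S - c\<^sub>i S\<^sup>2 \<le> r\<^sub>i\<^sup>2 / c\<^sub>i\<close> with \<open>S = \<Sum> r\<^sub>i\<close>; equality holds for \<open>c\<^sub>i = r\<^sub>i / S\<close>.\<close>

lemma square_sum_le_sum_inverse_weighted:
  fixes r c :: "'i::finite \<Rightarrow> real"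
  assumes r: "\<And>i. r i \<ge> 0" and c: "\<And>i. c i \<ge> 0" and sc: "sum c UNIV \<le> 1"
    and z: "\<And>i. c i = 0 \<Longrightarrow> r i = 0"
  shows "(sum r UNIV)^2 \<le> (\<Sum>i\<in>UNIV. inverse (c i) * (r i)^2)"
proof -
  define S where "S = sum r UNIV"
  have "2 * r i * S - c i * S^2 \<le> inverse (c i) * (r i)^2" for i
  proof (cases "c i = 0")
    case False
    hence cp: "c i > 0" using c[of i] by simp
    have "0 \<le> (r i - c i * S)^2 / c i" using cp by simp
    also have "\<dots> = inverse (c i) * (r i)^2 - 2 * r i * S + c i * S^2"
      using cp by (simp add: field_simps power2_eq_square)
    finally show ?thesis by simp
  qed (use z in simp)
  hence "(\<Sum>i\<in>UNIV. 2 * r i * S - c i * S^2) \<le> (\<Sum>i\<in>UNIV. inverse (c i) * (r i)^2)"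
    by (rule sum_mono)
  moreover have "(\<Sum>i\<in>UNIV. 2 * r i * S - c i * S^2) = 2 * S * S - sum c UNIV * S^2"
    by (simp add: sum_subtractf sum_distrib_right[symmetric] S_def mult_ac)
  moreover have "sum c UNIV * S^2 \<le> S^2" using mult_right_mono[OF sc, of "S^2"] by simp
  ultimately show ?thesis unfolding S_def[symmetric] by (simp add: power2_eq_square)
qed

lemma objP_le_objC:
  fixes W :: "real^'t::finite^'d::finite" and U :: "real^'d^'d"
  assumes F: "(W, w0, U ** Diag c ** transpose U) \<in> feasC" and U: "orthogonal_matrix U"
    and c: "\<And>i. c i \<ge> 0" and "\<gamma> \<ge> 0"
  shows "objP l \<gamma> \<beta> m x y (transpose U ** W) (transpose U *v w0) U
    \<le> objC l \<gamma> \<beta> m x y (W, w0, U ** Diag c ** transpose U)"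
proof -
  define A where "A = transpose U ** W"
  have U': "orthogonal_matrix (transpose U)" using U by simp
  have "sum c UNIV \<le> 1" using F trace_orthogonal_conj_Diag[OF U] by (simp add: feasC_def)
  moreover have "mrange W \<subseteq> mrange (U ** Diag c ** transpose U)" using F by (simp add: feasC_def)
  hence "norm (row i A) = 0" if "c i = 0" for i
    using that unfolding mrange_subset_orthogonal_conj_Diag_iff[OF U] A_def
    by (simp add: vec_eq_iff row_def)
  ultimately have "(norm21 A)^2 \<le> (\<Sum>i\<in>UNIV. inverse (c i) * (norm (row i A))^2)"
    unfolding norm21_def using c by (intro square_sum_le_sum_inverse_weighted) auto
  also have "\<dots> = (\<Sum>t\<in>UNIV. column t W \<bullet> (pinv (U ** Diag c ** transpose U) *v column t W))"
    unfolding A_def sum_pinv_quadratic_orthogonal_conj_Diag[OF U] ..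
  finally have penalty: "\<gamma> / real CARD('t) * (norm21 A)^2
      \<le> \<gamma> / real CARD('t) * (\<Sum>t\<in>UNIV. column t W \<bullet> (pinv (U ** Diag c ** transpose U) *v column t W))"
    using \<open>\<gamma> \<ge> 0\<close> by (intro mult_left_mono) auto
  have loss: "(column t A + transpose U *v w0) \<bullet> (transpose U *v z) = (column t W + w0) \<bullet> z" for t z
    unfolding A_def column_matrix_mult matrix_vector_right_distrib[symmetric]
    by (rule orthogonal_matrix_inner[OF U'])
  have "(norm (transpose U *v w0))^2 = w0 \<bullet> w0"
    unfolding power2_norm_eq_inner by (rule orthogonal_matrix_inner[OF U'])
  thus ?thesis using penalty unfolding objP_def objC_def loss A_def[symmetric] by simp
qed

text \<open>If \<open>\<parallel>A\<parallel>\<^sub>2\<^sub>,\<^sub>1 = 0\<close> then \<open>A = 0\<close> and the divisions below yield \<open>D = 0\<close>, which is still feasible.\<close>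

lemma lifted_solution_feasC:
  fixes A :: "real^'t::finite^'d::finite" and U :: "real^'d^'d"
  assumes U: "orthogonal_matrix U"
  shows "(U ** A, U *v a0, U ** Diag (\<lambda>i. norm (row i A) / norm21 A) ** transpose U) \<in> feasC"
proof -
  define c where "c i = norm (row i A) / norm21 A" for i
  have N: "norm21 A = (\<Sum>i\<in>UNIV. norm (row i A))" by (simp add: norm21_def)
  have "trace (U ** Diag c ** transpose U) \<le> 1"
    unfolding trace_orthogonal_conj_Diag[OF U] c_def sum_divide_distrib[symmetric] N
    by (cases "(\<Sum>i\<in>UNIV. norm (row i A)) = 0") auto
  moreover have "psd (U ** Diag c ** transpose U)"
    by (rule psd_orthogonal_conj_Diag[OF U]) (simp add: c_def N sum_nonneg)
  moreover have "A $ i $ t = 0" if "c i = 0" for i t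
  proof -
    have "norm (row i A) = 0"
      using that sum_nonneg_eq_0_iff[of UNIV "\<lambda>i. norm (row i A)"] by (auto simp: c_def N)
    thus ?thesis by (metis norm_eq_zero row_def vec_lambda_beta zero_index)
  qed
  hence "mrange (U ** A) \<subseteq> mrange (U ** Diag c ** transpose U)"
    unfolding mrange_subset_orthogonal_conj_Diag_iff[OF U] orthogonal_matrix_cancel(1)[OF U] by blast
  ultimately show ?thesis unfolding feasC_def c_def by simp
qed

lemma objC_lifted_solution:
  fixes A :: "real^'t::finite^'d::finite" and U :: "real^'d^'d"
  assumes U: "orthogonal_matrix U"
  shows "objC l \<gamma> \<beta> m x y (U ** A, U *v a0, U ** Diag (\<lambda>i. norm (row i A) / norm21 A) ** transpose U)
    = objP l \<gamma> \<beta> m x y A a0 U"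
proof -
  define N where "N = norm21 A"
  define r where "r i = norm (row i A)" for i
  have NS: "N = sum r UNIV" by (simp add: N_def r_def norm21_def)
  have "(\<Sum>t\<in>UNIV. column t (U ** A) \<bullet> (pinv (U ** Diag (\<lambda>i. r i / N) ** transpose U) *v column t (U ** A)))
      = (\<Sum>i\<in>UNIV. inverse (r i / N) * (r i)^2)"
    unfolding sum_pinv_quadratic_orthogonal_conj_Diag[OF U] orthogonal_matrix_cancel(1)[OF U] r_def ..
  also have "\<dots> = (\<Sum>i\<in>UNIV. N * r i)"
    by (intro sum.cong refl) (cases "N = 0"; cases "r i = 0"; simp add: field_simps power2_eq_square)
  also have "\<dots> = (norm21 A)^2" by (simp add: NS N_def[symmetric] sum_distrib_left power2_eq_square)
  finally have penalty: "(\<Sum>t\<in>UNIV. column t (U ** A) \<bullet>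
      (pinv (U ** Diag (\<lambda>i. norm (row i A) / norm21 A) ** transpose U) *v column t (U ** A))) = (norm21 A)^2"
    unfolding r_def N_def .
  have loss: "(column t (U ** A) + U *v a0) \<bullet> z = (column t A + a0) \<bullet> (transpose U *v z)" for t z
    unfolding column_matrix_mult matrix_vector_right_distrib[symmetric] inner_matrix_vector_transpose ..
  have "(U *v a0) \<bullet> (U *v a0) = (norm a0)^2"
    unfolding orthogonal_matrix_inner[OF U] by (simp add: power2_norm_eq_inner)
  thus ?thesis unfolding objC_def objP_def by (simp only: prod.case penalty loss)
qed

lemma optC_imp_optP:
  fixes W :: "real^'t::finite^'d::finite" and U :: "real^'d^'d"
  assumes "\<gamma> \<ge> 0" and opt: "optC l \<gamma> \<beta> m x y W w0 D" and U: "orthogonal_matrix U"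
    and eig: "\<And>i. D *v column i U = c i *s column i U"
  shows "optP l \<gamma> \<beta> m x y (transpose U ** W) (transpose U *v w0) U"
  unfolding optP_def
proof (intro conjI ballI)
  show "(transpose U ** W, transpose U *v w0, U) \<in> feasP" using U by (simp add: feasP_def)
  fix p assume "p \<in> (feasP :: ('t, 'd) param_triple set)"
  then obtain A' a0' U' where p: "p = (A', a0', U')" and U': "orthogonal_matrix U'"
    by (auto simp: feasP_def)
  have F: "(W, w0, D) \<in> feasC" using opt by (simp add: optC_def)
  hence c: "c i \<ge> 0" for i using psd_eigenvalue_nonneg[OF _ U eig] by (simp add: feasC_def)
  have D: "D = U ** Diag c ** transpose U" by (rule orthogonal_eigenbasis_imp_diagonal[OF U eig])
  have "objP l \<gamma> \<beta> m x y (transpose U ** W) (transpose U *v w0) U \<le> objC l \<gamma> \<beta> m x y (W, w0, D)"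
    unfolding D by (rule objP_le_objC[OF F[unfolded D] U c \<open>\<gamma> \<ge> 0\<close>])
  also have "\<dots> \<le> objP l \<gamma> \<beta> m x y A' a0' U'"
    using opt lifted_solution_feasC[OF U'] objC_lifted_solution[OF U'] unfolding optC_def by metis
  finally show "case p of (A', a0', U') \<Rightarrow>
      objP l \<gamma> \<beta> m x y (transpose U ** W) (transpose U *v w0) U \<le> objP l \<gamma> \<beta> m x y A' a0' U'"
    using p by simp
qed

lemma optP_imp_optC:
  fixes A :: "real^'t::finite^'d::finite" and U :: "real^'d^'d"
  assumes "\<gamma> \<ge> 0" and opt: "optP l \<gamma> \<beta> m x y A a0 U"
  shows "optC l \<gamma> \<beta> m x y (U ** A) (U *v a0) (U ** Diag (\<lambda>i. norm (row i A) / norm21 A) ** transpose U)"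
  unfolding optC_def
proof (intro conjI ballI)
  have U: "orthogonal_matrix U" using opt by (simp add: optP_def feasP_def)
  show "(U ** A, U *v a0, U ** Diag (\<lambda>i. norm (row i A) / norm21 A) ** transpose U) \<in> feasC"
    by (rule lifted_solution_feasC[OF U])
  fix p assume F: "p \<in> (feasC :: ('t, 'd) param_triple set)"
  obtain W' w0' D' where p: "p = (W', w0', D')" by (cases p)
  have "psd D'" using F p by (simp add: feasC_def)
  then obtain U' c where U': "orthogonal_matrix U'" and D': "D' = U' ** Diag c ** transpose U'"
    and c: "\<And>i. c i \<ge> 0" using psd_orthogonal_diagonalization by blast
  have "objC l \<gamma> \<beta> m x y (U ** A, U *v a0, U ** Diag (\<lambda>i. norm (row i A) / norm21 A) ** transpose U)
      = objP l \<gamma> \<beta> m x y A a0 U" by (rule objC_lifted_solution[OF U])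
  also have "\<dots> \<le> objP l \<gamma> \<beta> m x y (transpose U' ** W') (transpose U' *v w0') U'"
    using opt U' unfolding optP_def feasP_def by fastforce
  also have "\<dots> \<le> objC l \<gamma> \<beta> m x y p"
    unfolding p D' by (rule objP_le_objC[OF F[unfolded p D'] U' c \<open>\<gamma> \<ge> 0\<close>])
  finally show "objC l \<gamma> \<beta> m x y (U ** A, U *v a0, U ** Diag (\<lambda>i. norm (row i A) / norm21 A) ** transpose U)
      \<le> objC l \<gamma> \<beta> m x y p" .
qed

theorem theorem1:
  fixes l :: "real \<Rightarrow> real \<Rightarrow> real" and \<gamma> \<beta> :: real
    and m :: "'t::finite \<Rightarrow> nat"
    and x :: "'t \<Rightarrow> nat \<Rightarrow> real^'d::finite" and y :: "'t \<Rightarrow> nat \<Rightarrow> real"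
  assumes "\<gamma> > 0" and "\<beta> > 0"
    and "\<forall>a. convex_on UNIV (l a)"
  shows "(convex (feasC :: ((real^'t^'d) \<times> (real^'d) \<times> (real^'d^'d)) set)
          \<and> convex_on feasC (objC l \<gamma> \<beta> m x y))
     \<and> (\<forall>W w0 D U. optC l \<gamma> \<beta> m x y W w0 D \<and> orthogonal_matrix U \<and>
           (\<forall>i. \<exists>c. D *v column i U = c *s column i U) \<longrightarrow>
           optP l \<gamma> \<beta> m x y (transpose U ** W) (transpose U *v w0) U)
     \<and> (\<forall>A a0 U. optP l \<gamma> \<beta> m x y A a0 U \<longrightarrow>
           optC l \<gamma> \<beta> m x y (U ** A) (U *v a0)
             (U ** Diag (\<lambda>i. norm (row i A) / norm21 A) ** transpose U))"
proof -
  have "\<gamma> \<ge> 0" "\<beta> \<ge> 0" using assms(1,2) by auto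
  show ?thesis
  proof (intro conjI allI impI)
    show "convex (feasC :: ('t, 'd) param_triple set)" by (rule convex_feasC)
    show "convex_on (feasC :: ('t, 'd) param_triple set) (objC l \<gamma> \<beta> m x y)"
      using convex_on_objC \<open>\<gamma> \<ge> 0\<close> \<open>\<beta> \<ge> 0\<close> assms(3) by blast
    fix A :: "real^'t^'d" and a0 U
    assume "optP l \<gamma> \<beta> m x y A a0 U"
    with \<open>\<gamma> \<ge> 0\<close> show "optC l \<gamma> \<beta> m x y (U ** A) (U *v a0)
        (U ** Diag (\<lambda>i. norm (row i A) / norm21 A) ** transpose U)" by (rule optP_imp_optC)
  next
    fix W :: "real^'t^'d" and w0 D U
    assume h: "optC l \<gamma> \<beta> m x y W w0 D \<and> orthogonal_matrix U \<and> (\<forall>i. \<exists>c. D *v column i U = c *s column i U)"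
    then obtain c where "\<And>i. D *v column i U = c i *s column i U" by metis
    with h show "optP l \<gamma> \<beta> m x y (transpose U ** W) (transpose U *v w0) U"
      using optC_imp_optP[OF \<open>\<gamma> \<ge> 0\<close>] by blast
  qed
qed

end
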